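(* Let $(S_n,X_n)_{n\ge0}$ be an alternating non-homogeneous semi-Markov process with $S_0=1$, $X_0=0$ and Gamma semi-Markov kernels with shape functions $k_Y,k_Z$ taking values in $[1,\infty)$ and rate functions $\lambda_Y,\lambda_Z$ taking values in $(0,\infty)$, all measurable, such that $\lambda_Y(x)\le c$ and $\lambda_Z(x)\le c$ for all $x\ge0$ for some $c>0$. Then its renewal function satisfies $M(t)\le ct$ for all $t\ge 0$.
   Context: Let $(S_n,X_n)_{n\ge0}$ be random variables on a probability space with $S_n\in\{0,1\}$, $0=X_0\le X_1\le X_2\le\cdots$, $S_0=1$, and alternating states: $S_n=1$ for even $n$ and $S_n=0$ for odd $n$. Write $T_{n+1}=X_{n+1}-X_n$. The process is called an alternating non-homogeneous semi-Markov process with semi-Markov kernels $G_Y,G_Z$ if for every $n\ge 0$ the conditional distribution of $T_{n+1}$ given $(S_0,X_0),\dots,(S_n,X_n)$ depends only on $(S_n,X_n)$ (and not on $n$), with $\mathbb P(T_{n+1}\le \tau\mid S_n=1,X_n=x)=G_Y(x,\tau)$ and $\mathbb P(T_{n+1}\le\tau\mid S_n=0,X_n=x)=G_Z(x,\tau)$ for all $x,\tau\ge 0$; here for each $x\ge0$, $G_Y(x,\cdot)$ and $G_Z(x,\cdot)$ are distribution functions on $[0,\infty)$, jointly measurable in $(x,\tau)$, absolutely continuous with densities $g_Y(x,\cdot)$, $g_Z(x,\cdot)$. "Gamma semi-Markov kernels with shape $k_T$ and rate $\lambda_T$" means $g_T(x,\tau)=\lambda_T(x)^{k_T(x)}\tau^{k_T(x)-1}e^{-\lambda_T(x)\tau}/\Gamma(k_T(x))$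 for $\tau\ge 0$, $T\in\{Y,Z\}$. The cycle-counting process is $N(t)=\sup\{n\in\mathbb N_0: X_{2n}\le t\}$ and the renewal function is $M(t)=\mathbb E N(t)=\sum_{n=1}^\infty \mathbb P(X_{2n}\le t)$, $t\ge0$. *)

theory Defs
  imports "HOL-Probability.Probability"
begin

definition gamma_dens :: "real \<Rightarrow> real \<Rightarrow> real \<Rightarrow> real" where
  "gamma_dens k l t = (if 0 \<le> t then l powr k * t powr (k - 1) * exp (- l * t) / Gamma k else 0)"

definition gamma_kernel :: "(real \<Rightarrow> real) \<Rightarrow> (real \<Rightarrow> real) \<Rightarrow> real \<Rightarrow> real \<Rightarrow> real" where
  "gamma_kernel k l x \<tau> = (LINT s:{0..\<tau>}|lborel. gamma_dens (k x) (l x) s)"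

definition hist_sets :: "'a measure \<Rightarrow> (nat \<Rightarrow> 'a \<Rightarrow> nat) \<Rightarrow> (nat \<Rightarrow> 'a \<Rightarrow> real) \<Rightarrow> nat \<Rightarrow> 'a set set" where
  "hist_sets M S X n = sigma_sets (space M)
     (\<Union>i\<in>{..n}. {(\<lambda>\<omega>. (S i \<omega>, X i \<omega>)) -` B \<inter> space M | B. B \<in> sets (borel :: (nat \<times> real) measure)})"

text \<open>Alternating non-homogeneous semi-Markov process with kernels GY, GZ:
  P(T_{n+1} \<le> tau | history up to n) = G_{S_n}(X_n, tau) a.s., written via the
  defining property of conditional probability.\<close>
definition alt_semi_markov ::
  "'a measure \<Rightarrow> (nat \<Rightarrow> 'a \<Rightarrow> nat) \<Rightarrow> (nat \<Rightarrow> 'a \<Rightarrow> real)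
   \<Rightarrow> (real \<Rightarrow> real \<Rightarrow> real) \<Rightarrow> (real \<Rightarrow> real \<Rightarrow> real) \<Rightarrow> bool" where
  "alt_semi_markov M S X GY GZ \<longleftrightarrow>
     prob_space M \<and>
     (\<forall>n. S n \<in> measurable M (count_space UNIV) \<and> X n \<in> borel_measurable M) \<and>
     (\<forall>n. \<forall>\<omega>\<in>space M. S n \<omega> = (if even n then 1 else 0)) \<and>
     (\<forall>\<omega>\<in>space M. X 0 \<omega> = 0) \<and>
     (\<forall>n. \<forall>\<omega>\<in>space M. X n \<omega> \<le> X (Suc n) \<omega>) \<and>
     (\<forall>n \<tau> A. 0 \<le> \<tau> \<longrightarrow> A \<in> hist_sets M S X n \<longrightarrow>
        measure M (A \<inter> {\<omega>\<in>space M. X (Suc n) \<omega> - X n \<omega> \<le> \<tau>}) =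
        (LINT \<omega>:A|M. (if S n \<omega> = 1 then GY (X n \<omega>) \<tau> else GZ (X n \<omega>) \<tau>)))"

text \<open>Renewal function M(t) = sum_{n\<ge>1} P(X_{2n} \<le> t), in ennreal (may be infinite a priori).\<close>
definition renewal_fun :: "'a measure \<Rightarrow> (nat \<Rightarrow> 'a \<Rightarrow> real) \<Rightarrow> real \<Rightarrow> ennreal" where
  "renewal_fun M X t = (\<Sum>n. emeasure M {\<omega>\<in>space M. X (2 * Suc n) \<omega> \<le> t})"

end

theory Submission
  imports Defs
begin

text \<open>A Gamma density of shape \<open>k \<ge> 1\<close> has hazard rate at most its rate, so each kernel \<open>G\<close>
  satisfies \<open>G b - G a \<le> c (b - a) (1 - G a)\<close>. For such a kernel \<open>P(T \<le> a) \<le> c E[min T a]\<close>; with the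
  increment \<open>T = X (n + 1) - X n\<close> and \<open>a = (t - X n)\<^sup>+\<close> this becomes
  \<open>P(X (n + 1) \<le> t) \<le> c (E (t - X n)\<^sup>+ - E (t - X (n + 1))\<^sup>+)\<close>, and summing over \<open>n\<close> telescopes to at
  most \<open>c E (t - X 0)\<^sup>+ = c t\<close>. As the kernel condition only concerns fixed \<open>\<tau>\<close>, \<open>E[min T a]\<close> is
  approximated by Riemann sums on a grid of mesh \<open>\<delta>\<close>, costing \<open>c \<delta>\<close> per step; then \<open>\<delta> \<rightarrow> 0\<close>.\<close>

text \<open>Integrated form of the hazard-rate bound \<open>F' / (1 - F) \<le> c\<close>; it is all the argument uses
  about the kernels.\<close>
definition hazard_bounded :: "real \<Rightarrow> (real \<Rightarrow> real) \<Rightarrow> bool" where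
  "hazard_bounded c F \<longleftrightarrow> F 0 = 0 \<and> (\<forall>\<tau>\<ge>0. 0 \<le> F \<tau> \<and> F \<tau> \<le> 1) \<and>
     (\<forall>a b. 0 \<le> a \<longrightarrow> a \<le> b \<longrightarrow> F b - F a \<le> c * (b - a) * (1 - F a))"

lemma hazard_bounded_mono:
  assumes "hazard_bounded l F" and "l \<le> c"
  shows "hazard_bounded c F"
  unfolding hazard_bounded_def
proof (intro conjI allI impI)
  fix a b :: real assume a: "0 \<le> a" and ab: "a \<le> b"
  have "0 \<le> (b - a) * (1 - F a)" using assms(1) a ab by (simp add: hazard_bounded_def)
  hence "l * (b - a) * (1 - F a) \<le> c * (b - a) * (1 - F a)"
    using assms(2) by (metis mult.assoc mult_right_mono)
  thus "F b - F a \<le> c * (b - a) * (1 - F a)"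
    using assms(1) a ab unfolding hazard_bounded_def by fastforce
qed (use assms(1) in \<open>auto simp: hazard_bounded_def\<close>)

section \<open>Gamma kernels\<close>

lemma borel_measurable_Gamma_real[measurable]: "(Gamma :: real \<Rightarrow> real) \<in> borel_measurable borel"
proof -
  have "rGamma \<in> borel_measurable (borel :: real measure)"
    by (intro borel_measurable_continuous_onI continuous_on_rGamma)
  hence "(\<lambda>x::real. inverse (rGamma x)) \<in> borel_measurable borel" by measurable
  thus ?thesis by (simp add: Gamma_def[abs_def])
qed

lemma borel_measurable_gamma_dens[measurable (raw)]:
  assumes [measurable]: "f \<in> borel_measurable M" "g \<in> borel_measurable M" "h \<in> borel_measurable M"
  shows "(\<lambda>x. gamma_dens (f x) (g x) (h x)) \<in> borel_measurable M"
  unfolding gamma_dens_def by measurable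

lemma gamma_dens_nonneg: "0 < k \<Longrightarrow> 0 < l \<Longrightarrow> 0 \<le> gamma_dens k l s"
  unfolding gamma_dens_def using Gamma_real_pos[of k] by auto

lemma gamma_dens_has_integral:
  assumes k: "0 < k" and l: "0 < l"
  shows "(gamma_dens k l has_integral 1) UNIV"
proof -
  define h where "h t = indicator {0..} t * t powr (k - 1) / exp t" for t :: real
  have [measurable]: "h \<in> borel_measurable borel" unfolding h_def by measurable
  have scale: "ennreal l * ennreal (h (l * x)) = ennreal (Gamma k) * ennreal (gamma_dens k l x)" for x
  proof (cases "0 \<le> x")
    case True
    have "l * h (l * x) = l * ((l * x) powr (k - 1) / exp (l * x))"
      using True l by (simp add: h_def)
    also have "\<dots> = l powr k * x powr (k - 1) * exp (- l * x)"
      using True l by (simp add: powr_mult powr_diff exp_minus field_simps powr_def[of l k] powr_def[of l "k-1"])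
    also have "\<dots> = Gamma k * gamma_dens k l x"
      using True Gamma_real_pos[OF k] by (simp add: gamma_dens_def)
    finally show ?thesis using l Gamma_real_pos[OF k]
      by (simp add: ennreal_mult'[symmetric])
  next
    case False
    thus ?thesis using l by (simp add: h_def gamma_dens_def zero_le_mult_iff)
  qed
  have "ennreal (Gamma k) = (\<integral>\<^sup>+t. ennreal (h t) \<partial>lborel)"
    using Gamma_conv_nn_integral_real[OF k] by (simp add: h_def)
  also have "\<dots> = ennreal l * (\<integral>\<^sup>+x. ennreal (h (0 + l * x)) \<partial>lborel)"
    using nn_integral_real_affine[of "\<lambda>t. ennreal (h t)" l 0] l by simp
  also have "\<dots> = ennreal (Gamma k) * (\<integral>\<^sup>+x. ennreal (gamma_dens k l x) \<partial>lborel)"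
    by (simp add: scale nn_integral_cmult[symmetric])
  finally have "(\<integral>\<^sup>+x. ennreal (gamma_dens k l x) \<partial>lborel) = 1"
    using Gamma_real_pos[OF k] ennreal_mult_cancel_left[of "ennreal (Gamma k)" 1]
    by (metis ennreal_eq_0_iff ennreal_neq_top mult.right_neutral not_le)
  hence "has_bochner_integral lborel (gamma_dens k l) 1"
    by (intro has_bochner_integral_nn_integral) (auto intro: gamma_dens_nonneg k l)
  thus ?thesis
    by (metis has_bochner_integral_iff has_integral_integral_lborel)
qed

lemma integrable_gamma_dens:
  assumes "0 < k" and "0 < l"
  shows "integrable lborel (gamma_dens k l)"
proof -
  have "gamma_dens k l absolutely_integrable_on UNIV"
    using gamma_dens_has_integral[OF assms] gamma_dens_nonneg[OF assms]
    by (intro nonnegative_absolutely_integrable_1) (auto simp: integrable_on_def)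
  thus ?thesis
    using integrable_completion[of "gamma_dens k l" lborel] by (simp add: set_integrable_def)
qed

lemma gamma_dens_integrable_on:
  assumes "0 < k" and "0 < l" and "S \<in> sets borel"
  shows "gamma_dens k l integrable_on S"
proof -
  have "set_integrable lborel S (gamma_dens k l)"
    unfolding set_integrable_def using assms by (intro integrable_mult_indicator integrable_gamma_dens) auto
  thus ?thesis by (rule set_borel_integral_eq_integral(1))
qed

lemma gamma_dens_has_integral_nonneg_reals:
  assumes "0 < k" and "0 < l"
  shows "(gamma_dens k l has_integral 1) {0..}"
proof -
  have "((\<lambda>x. if x \<in> {0..} then gamma_dens k l x else 0) has_integral 1) UNIV"
    using gamma_dens_has_integral[OF assms]
    by (rule has_integral_eq[rotated]) (auto simp: gamma_dens_def)
  thus ?thesis using has_integral_restrict_UNIV by blast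
qed

lemma gamma_cdf_add_tail:
  assumes "0 < k" and "0 < l" and "0 \<le> a"
  shows "integral {0..a} (gamma_dens k l) + integral {a..} (gamma_dens k l) = 1"
proof -
  have "(gamma_dens k l has_integral (integral {0..a} (gamma_dens k l) + integral {a..} (gamma_dens k l)))
          ({0..a} \<union> {a..})"
    using assms(1,2)
    by (intro has_integral_Un integrable_integral gamma_dens_integrable_on)
       (auto intro: negligible_subset[of "{a}"])
  moreover have "{0..a} \<union> {a..} = {0::real..}" using assms(3) by auto
  ultimately show ?thesis
    using gamma_dens_has_integral_nonneg_reals[OF assms(1,2)] has_integral_unique by metis
qed

text \<open>For \<open>r \<ge> s\<close> and shape \<open>k \<ge> 1\<close> the factor \<open>r powr (k - 1)\<close> only grows, so the density
  dominates \<open>gamma_dens k l s * exp (- l * (r - s))\<close>, whose integral over \<open>{s..}\<close> is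
  \<open>gamma_dens k l s / l\<close>.\<close>
lemma gamma_dens_le_hazard_tail:
  assumes k: "1 \<le> k" and l: "0 < l" and s: "0 \<le> s"
  shows "gamma_dens k l s \<le> l * integral {s..} (gamma_dens k l)"
proof -
  let ?g = "gamma_dens k l"
  have k0: "0 < k" using k by simp
  have "((\<lambda>r. (?g s * exp (l * s)) * exp (- l * r)) has_integral (?g s * exp (l * s)) * (exp (- l * s) / l)) {s..}"
    by (intro has_integral_mult_right has_integral_exp_minus_to_infinity l)
  moreover have "(?g s * exp (l * s)) * (exp (- l * s) / l) = ?g s / l"
    using l by (simp add: exp_minus field_simps)
  ultimately have exp_int: "((\<lambda>r. (?g s * exp (l * s)) * exp (- l * r)) has_integral ?g s / l) {s..}"
    by metis
  have dominated: "(?g s * exp (l * s)) * exp (- l * r) \<le> ?g r" if r: "r \<in> {s..}" for r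
  proof (cases "s = 0")
    case True thus ?thesis using gamma_dens_nonneg[OF k0 l] by (simp add: gamma_dens_def)
  next
    case False
    have "s powr (k - 1) \<le> r powr (k - 1)" using r s k by (intro powr_mono2) auto
    hence "l powr k * s powr (k - 1) / Gamma k * exp (- l * r) \<le> l powr k * r powr (k - 1) / Gamma k * exp (- l * r)"
      using Gamma_real_pos[OF k0] l by (intro mult_right_mono divide_right_mono mult_left_mono) auto
    thus ?thesis using s r by (simp add: gamma_dens_def exp_minus field_simps)
  qed
  have "?g s / l \<le> integral {s..} ?g"
    by (rule has_integral_le[OF exp_int integrable_integral dominated])
       (auto intro: gamma_dens_integrable_on k0 l)
  thus ?thesis using l by (simp add: pos_divide_le_eq mult.commute)
qed

lemma hazard_bounded_gamma_cdf:
  assumes k: "1 \<le> k" and l: "0 < l"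
  shows "hazard_bounded l (\<lambda>\<tau>. integral {0..\<tau>} (gamma_dens k l))"
proof -
  let ?g = "gamma_dens k l"
  have k0: "0 < k" using k by simp
  have int_on: "?g integrable_on S" if "S \<in> sets borel" for S
    using gamma_dens_integrable_on[OF k0 l that] .
  have nonneg: "0 \<le> integral S ?g" if "S \<in> sets borel" for S
    using int_on[OF that] gamma_dens_nonneg[OF k0 l] by (intro integral_nonneg) auto
  have increment: "integral {0..b} ?g - integral {0..a} ?g \<le> l * (b - a) * (1 - integral {0..a} ?g)"
    if a: "0 \<le> a" and ab: "a \<le> b" for a b
  proof -
    have "integral {0..a} ?g + integral {a..b} ?g = integral {0..b} ?g"
      using a ab int_on[of "{0..b}"] by (intro Henstock_Kurzweil_Integration.integral_combine) auto
    moreover have "integral {a..b} ?g \<le> integral {a..b} (\<lambda>_. l * integral {a..} ?g)"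
    proof (rule integral_le[OF int_on])
      fix s assume s: "s \<in> {a..b}"
      have "integral {s..} ?g \<le> integral {a..} ?g"
        using s gamma_dens_nonneg[OF k0 l] by (intro integral_subset_le int_on) auto
      thus "?g s \<le> l * integral {a..} ?g"
        using gamma_dens_le_hazard_tail[OF k l, of s] s a l
        by (smt (verit, best) atLeastAtMost_iff mult_left_mono)
    qed auto
    moreover have "integral {a..} ?g = 1 - integral {0..a} ?g"
      using gamma_cdf_add_tail[OF k0 l a] by simp
    ultimately show ?thesis using ab by (simp add: algebra_simps)
  qed
  have "0 \<le> integral {0..\<tau>} ?g \<and> integral {0..\<tau>} ?g \<le> 1" if "0 \<le> \<tau>" for \<tau>
    using gamma_cdf_add_tail[OF k0 l that] nonneg[of "{0..\<tau>}"] nonneg[of "{\<tau>..}"] by auto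
  with increment show ?thesis unfolding hazard_bounded_def by simp
qed

lemma gamma_kernel_eq_integral:
  assumes "0 < k x" and "0 < l x"
  shows "gamma_kernel k l x \<tau> = integral {0..\<tau>} (gamma_dens (k x) (l x))"
proof -
  have "set_integrable lborel {0..\<tau>} (gamma_dens (k x) (l x))"
    unfolding set_integrable_def using assms by (intro integrable_mult_indicator integrable_gamma_dens) auto
  thus ?thesis unfolding gamma_kernel_def by (rule set_borel_integral_eq_integral(2))
qed

lemma hazard_bounded_gamma_kernel:
  assumes "1 \<le> k x" and "0 < l x" and "l x \<le> c"
  shows "hazard_bounded c (gamma_kernel k l x)"
proof -
  have "gamma_kernel k l x = (\<lambda>\<tau>. integral {0..\<tau>} (gamma_dens (k x) (l x)))"
    using assms by (intro ext gamma_kernel_eq_integral) auto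
  thus ?thesis using hazard_bounded_mono[OF hazard_bounded_gamma_cdf assms(3)] assms by simp
qed

lemma borel_measurable_gamma_kernel:
  assumes [measurable]: "k \<in> borel_measurable borel" "l \<in> borel_measurable borel"
  shows "(\<lambda>x. gamma_kernel k l x \<tau>) \<in> borel_measurable borel"
  unfolding gamma_kernel_def set_lebesgue_integral_def
  by (rule lborel.borel_measurable_lebesgue_integral) measurable

section \<open>Grid estimates\<close>

lemma le_nat_floor_iff: "0 \<le> y \<Longrightarrow> j \<le> nat \<lfloor>y\<rfloor> \<longleftrightarrow> real j \<le> y"
  by (meson le_nat_floor of_nat_floor of_nat_le_iff order_trans)

lemma nat_floor_eq_iff: "0 \<le> y \<Longrightarrow> nat \<lfloor>y\<rfloor> = J \<longleftrightarrow> real J \<le> y \<and> y < real J + 1"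
proof
  assume "0 \<le> y" and "nat \<lfloor>y\<rfloor> = J"
  moreover have "real (nat \<lfloor>y\<rfloor>) = of_int \<lfloor>y\<rfloor>" using \<open>0 \<le> y\<close> by simp
  ultimately show "real J \<le> y \<and> y < real J + 1" by (simp add: of_int_floor_le)
next
  assume "real J \<le> y \<and> y < real J + 1"
  hence "\<lfloor>y\<rfloor> = int J" by (intro floor_unique) auto
  thus "nat \<lfloor>y\<rfloor> = J" by simp
qed

lemma hazard_bounded_grid_le:
  assumes "hazard_bounded c f" and "0 < \<delta>"
  shows "f (real m * \<delta>) \<le> c * \<delta> * (\<Sum>j<m. 1 - f (real j * \<delta>))"
proof (induction m)
  case 0 thus ?case using assms(1) by (simp add: hazard_bounded_def)
next
  case (Suc m)
  have "f (real (Suc m) * \<delta>) - f (real m * \<delta>) \<le> c * (real (Suc m) * \<delta> - real m * \<delta>) * (1 - f (real m * \<delta>))"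
    using assms by (auto simp: hazard_bounded_def intro: mult_right_mono)
  also have "\<dots> = c * \<delta> * (1 - f (real m * \<delta>))" by (simp add: algebra_simps)
  finally show ?case using Suc by (simp add: algebra_simps)
qed

text \<open>The cells \<open>{t - (J + 1) * \<delta> <.. t - J * \<delta>}\<close> partition \<open>{..t}\<close>, so at most one summand on the
  left is non-zero, and that one is bounded by \<open>hazard_bounded_grid_le\<close>.\<close>
lemma hazard_bounded_cell_sum_le:
  fixes t :: real
  assumes f: "hazard_bounded c f" and c: "0 \<le> c" and \<delta>: "0 < \<delta>" and x: "0 \<le> x"
  defines "K \<equiv> nat \<lfloor>t / \<delta>\<rfloor>"
  shows "(\<Sum>J\<le>K. indicator {t - (real J + 1) * \<delta> <.. t - real J * \<delta>} x * f ((real J + 1) * \<delta>))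
       \<le> c * \<delta> + c * \<delta> * (\<Sum>j\<in>{1..K}. indicator {..t - real j * \<delta>} x * (1 - f (real j * \<delta>)))"
proof (cases "x \<le> t")
  case False
  have "0 \<le> (\<Sum>j\<in>{1..K}. indicator {..t - real j * \<delta>} x * (1 - f (real j * \<delta>)))"
    using f \<delta> by (intro sum_nonneg) (auto simp: indicator_def hazard_bounded_def)
  moreover have "indicator {t - (real J + 1) * \<delta> <.. t - real J * \<delta>} x = (0::real)" for J
    using False \<delta> by (auto simp: indicator_def intro: order_trans[of _ "t - real J * \<delta>"])
  ultimately show ?thesis using c \<delta> by simp
next
  case True
  define y where "y = (t - x) / \<delta>"
  have y: "0 \<le> y" using True \<delta> by (simp add: y_def)
  define J0 where "J0 = nat \<lfloor>y\<rfloor>"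
  have J0K: "J0 \<le> K" unfolding J0_def K_def y_def using x \<delta>
    by (intro nat_mono floor_mono divide_right_mono) auto
  have in_cell: "x \<in> {t - (real J + 1) * \<delta> <.. t - real J * \<delta>} \<longleftrightarrow> J = J0" for J
    using nat_floor_eq_iff[OF y, of J] \<delta> unfolding J0_def y_def by (auto simp: field_simps)
  have below: "x \<in> {..t - real j * \<delta>} \<longleftrightarrow> j \<le> J0" for j
    using le_nat_floor_iff[OF y, of j] \<delta> unfolding J0_def y_def by (auto simp: field_simps)
  have "(\<Sum>J\<le>K. indicator {t - (real J + 1) * \<delta> <.. t - real J * \<delta>} x * f ((real J + 1) * \<delta>))
      = f (real (Suc J0) * \<delta>)"
    unfolding indicator_def in_cell using J0K by (simp add: add.commute)
  also have "\<dots> \<le> c * \<delta> * (\<Sum>j<Suc J0. 1 - f (real j * \<delta>))"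
    by (rule hazard_bounded_grid_le[OF f \<delta>])
  also have "(\<Sum>j<Suc J0. 1 - f (real j * \<delta>)) = 1 + (\<Sum>j\<in>{1..J0}. 1 - f (real j * \<delta>))"
  proof -
    have "{..<Suc J0} = insert 0 {1..J0}" by auto
    thus ?thesis using f by (simp add: hazard_bounded_def)
  qed
  also have "(\<Sum>j\<in>{1..J0}. 1 - f (real j * \<delta>))
      = (\<Sum>j\<in>{1..K}. indicator {..t - real j * \<delta>} x * (1 - f (real j * \<delta>)))"
    unfolding indicator_def below using J0K by (intro sum.mono_neutral_cong_left) auto
  finally show ?thesis by (simp add: algebra_simps)
qed

text \<open>The sum counts grid points \<open>j * \<delta>\<close> in \<open>(0, min (y - x) (t - x)]\<close>, and the right side is
  that minimum when \<open>x \<le> t\<close>.\<close>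
lemma grid_count_le_max_diff:
  fixes x y t \<delta> :: real
  assumes \<delta>: "0 < \<delta>" and xy: "x \<le> y"
  defines "K \<equiv> nat \<lfloor>t / \<delta>\<rfloor>"
  shows "\<delta> * (\<Sum>j\<in>{1..K}. indicator {..t - real j * \<delta>} x * indicator {real j * \<delta> <..} (y - x))
         \<le> max 0 (t - x) - max 0 (t - y)"
proof -
  define S where "S = {j\<in>{1..K}. x \<le> t - real j * \<delta> \<and> real j * \<delta> < y - x}"
  have sum_eq: "(\<Sum>j\<in>{1..K}. indicator {..t - real j * \<delta>} x * indicator {real j * \<delta> <..} (y - x))
      = real (card S)"
    unfolding S_def by (simp add: indicator_def of_bool_def[symmetric] Int_def)
  show ?thesis
  proof (cases "S = {}")
    case True thus ?thesis using sum_eq xy by simp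
  next
    case False
    then obtain j1 where "j1 \<in> S" by auto
    hence xt: "x \<le> t" using \<delta> unfolding S_def by (auto intro: order_trans[of _ "t - real j1 * \<delta>"])
    define m where "m = min (y - x) (t - x)"
    have m: "0 \<le> m / \<delta>" using xt xy \<delta> by (simp add: m_def)
    have "S \<subseteq> {1..nat \<lfloor>m / \<delta>\<rfloor>}"
    proof
      fix j assume j: "j \<in> S"
      hence "real j \<le> m / \<delta>" using \<delta> unfolding S_def m_def by (auto simp: field_simps)
      thus "j \<in> {1..nat \<lfloor>m / \<delta>\<rfloor>}" using le_nat_floor_iff[OF m] j unfolding S_def by auto
    qed
    hence "card S \<le> nat \<lfloor>m / \<delta>\<rfloor>" using card_mono[of "{1..nat \<lfloor>m / \<delta>\<rfloor>}" S] by simp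
    hence "\<delta> * real (card S) \<le> m"
      using le_nat_floor_iff[OF m] \<delta> by (simp add: field_simps)
    moreover have "m \<le> max 0 (t - x) - max 0 (t - y)" using xt xy by (auto simp: m_def)
    ultimately show ?thesis using sum_eq by simp
  qed
qed

section \<open>Processes with hazard-bounded increments\<close>

text \<open>\<open>F n \<tau> \<omega>\<close> plays the role of the conditional distribution function of the increment
  \<open>X (Suc n) - X n\<close> given the past; only its integrals against events \<open>X n \<in> B\<close> are needed.\<close>
locale hazard_bounded_increments = prob_space M
  for M :: "'a measure" and X :: "nat \<Rightarrow> 'a \<Rightarrow> real" and F :: "nat \<Rightarrow> real \<Rightarrow> 'a \<Rightarrow> real"
    and c :: real +
  assumes X_measurable[measurable]: "X n \<in> borel_measurable M"
    and X_0: "\<omega> \<in> space M \<Longrightarrow> X 0 \<omega> = 0"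
    and X_mono: "\<omega> \<in> space M \<Longrightarrow> X n \<omega> \<le> X (Suc n) \<omega>"
    and F_measurable[measurable]: "F n \<tau> \<in> borel_measurable M"
    and F_hazard_bounded: "\<omega> \<in> space M \<Longrightarrow> hazard_bounded c (\<lambda>\<tau>. F n \<tau> \<omega>)"
    and kernel: "0 \<le> \<tau> \<Longrightarrow> B \<in> sets borel \<Longrightarrow>
       measure M {\<omega>\<in>space M. X n \<omega> \<in> B \<and> X (Suc n) \<omega> - X n \<omega> \<le> \<tau>}
         = (\<integral>\<omega>. indicator B (X n \<omega>) * F n \<tau> \<omega> \<partial>M)"
    and c_nonneg: "0 \<le> c"
begin

lemma X_nonneg: "\<omega> \<in> space M \<Longrightarrow> 0 \<le> X n \<omega>"
  by (induction n) (auto simp: X_0 intro: order_trans[OF _ X_mono])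

lemma F_bounds: "\<omega> \<in> space M \<Longrightarrow> 0 \<le> \<tau> \<Longrightarrow> 0 \<le> F n \<tau> \<omega> \<and> F n \<tau> \<omega> \<le> 1"
  using F_hazard_bounded unfolding hazard_bounded_def by blast

lemma integrable_bounded:
  fixes B :: real
  assumes "f \<in> borel_measurable M" and "\<And>\<omega>. \<omega> \<in> space M \<Longrightarrow> \<bar>f \<omega>\<bar> \<le> B"
  shows "integrable M f"
  using assms by (intro integrable_const_bound[where B=B]) (auto intro!: AE_I2)

lemma integrable_indicator_F:
  "0 \<le> \<tau> \<Longrightarrow> B \<in> sets borel \<Longrightarrow> integrable M (\<lambda>\<omega>. indicator B (X n \<omega>) * F n \<tau> \<omega>)"
  using F_bounds by (intro integrable_bounded[where B=1]) (auto simp: indicator_def abs_le_iff)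

lemma integrable_indicator_one_minus_F:
  "0 \<le> \<tau> \<Longrightarrow> B \<in> sets borel \<Longrightarrow> integrable M (\<lambda>\<omega>. indicator B (X n \<omega>) * (1 - F n \<tau> \<omega>))"
  using F_bounds by (intro integrable_bounded[where B=1]) (auto simp: indicator_def abs_le_iff)

lemma kernel_survival:
  assumes "0 \<le> \<tau>" and B: "B \<in> sets borel"
  shows "(\<integral>\<omega>. indicator B (X n \<omega>) * (1 - F n \<tau> \<omega>) \<partial>M)
    = measure M {\<omega>\<in>space M. X n \<omega> \<in> B \<and> \<tau> < X (Suc n) \<omega> - X n \<omega>}"
proof -
  let ?A = "{\<omega>\<in>space M. X n \<omega> \<in> B}"
  have [measurable]: "?A \<in> sets M" using B by measurable
  have "(\<integral>\<omega>. indicator B (X n \<omega>) \<partial>M) = (\<integral>\<omega>. indicator ?A \<omega> \<partial>M :: real)"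
    by (intro Bochner_Integration.integral_cong) (auto simp: indicator_def)
  hence ind: "(\<integral>\<omega>. indicator B (X n \<omega>) \<partial>M) = measure M ?A" by simp
  have "(\<integral>\<omega>. indicator B (X n \<omega>) * (1 - F n \<tau> \<omega>) \<partial>M)
      = (\<integral>\<omega>. indicator B (X n \<omega>) \<partial>M) - (\<integral>\<omega>. indicator B (X n \<omega>) * F n \<tau> \<omega> \<partial>M)"
    using integrable_indicator_F[OF assms] B
    by (subst Bochner_Integration.integral_diff[symmetric])
       (auto intro!: integrable_bounded[where B=1] simp: algebra_simps indicator_def)
  also have "\<dots> = measure M ?A - measure M {\<omega>\<in>space M. X n \<omega> \<in> B \<and> X (Suc n) \<omega> - X n \<omega> \<le> \<tau>}"
    using ind kernel[OF assms] by simp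
  also have "\<dots> = measure M (?A - {\<omega>\<in>space M. X n \<omega> \<in> B \<and> X (Suc n) \<omega> - X n \<omega> \<le> \<tau>})"
    using B by (intro finite_measure_Diff[symmetric]) auto
  also have "?A - {\<omega>\<in>space M. X n \<omega> \<in> B \<and> X (Suc n) \<omega> - X n \<omega> \<le> \<tau>}
      = {\<omega>\<in>space M. X n \<omega> \<in> B \<and> \<tau> < X (Suc n) \<omega> - X n \<omega>}"
    by auto
  finally show ?thesis .
qed

lemma prob_le_cell_kernel_sum:
  fixes t :: real
  assumes \<delta>: "0 < \<delta>"
  defines "K \<equiv> nat \<lfloor>t / \<delta>\<rfloor>" and "cell J \<equiv> {t - (real J + 1) * \<delta> <.. t - real J * \<delta>}"
  shows "measure M {\<omega>\<in>space M. X (Suc n) \<omega> \<le> t}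
    \<le> (\<integral>\<omega>. (\<Sum>J\<le>K. indicator (cell J) (X n \<omega>) * F n ((real J + 1) * \<delta>) \<omega>) \<partial>M)"
proof -
  let ?E = "\<lambda>J. {\<omega>\<in>space M. X n \<omega> \<in> cell J \<and> X (Suc n) \<omega> - X n \<omega> \<le> (real J + 1) * \<delta>}"
  have cell_borel[measurable]: "cell J \<in> sets borel" for J unfolding cell_def by simp
  have cover: "{\<omega>\<in>space M. X (Suc n) \<omega> \<le> t} \<subseteq> (\<Union>J\<le>K. ?E J)"
  proof
    fix \<omega> assume "\<omega> \<in> {\<omega>\<in>space M. X (Suc n) \<omega> \<le> t}"
    hence \<omega>: "\<omega> \<in> space M" and le_t: "X (Suc n) \<omega> \<le> t" by auto
    define y where "y = (t - X n \<omega>) / \<delta>"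
    have y: "0 \<le> y" using X_mono[OF \<omega>, of n] le_t \<delta> by (simp add: y_def)
    define J where "J = nat \<lfloor>y\<rfloor>"
    have J: "real J \<le> y \<and> y < real J + 1" using nat_floor_eq_iff[OF y, of J] unfolding J_def by simp
    have "J \<le> K" unfolding J_def K_def y_def using X_nonneg[OF \<omega>] \<delta>
      by (intro nat_mono floor_mono divide_right_mono) auto
    moreover have "\<omega> \<in> ?E J"
      using J \<delta> \<omega> le_t unfolding cell_def y_def by (auto simp: field_simps)
    ultimately show "\<omega> \<in> (\<Union>J\<le>K. ?E J)" by auto
  qed
  have "measure M {\<omega>\<in>space M. X (Suc n) \<omega> \<le> t} \<le> measure M (\<Union>J\<le>K. ?E J)"
    by (intro finite_measure_mono[OF cover]) measurable
  also have "\<dots> \<le> (\<Sum>J\<le>K. measure M (?E J))"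
    by (intro finite_measure_subadditive_finite) auto
  also have "\<dots> = (\<Sum>J\<le>K. \<integral>\<omega>. indicator (cell J) (X n \<omega>) * F n ((real J + 1) * \<delta>) \<omega> \<partial>M)"
    using \<delta> by (intro sum.cong refl kernel) auto
  also have "\<dots> = (\<integral>\<omega>. (\<Sum>J\<le>K. indicator (cell J) (X n \<omega>) * F n ((real J + 1) * \<delta>) \<omega>) \<partial>M)"
    using \<delta> by (intro Bochner_Integration.integral_sum[symmetric] integrable_indicator_F) auto
  finally show ?thesis .
qed

lemma grid_tail_sum_le_decrease:
  fixes t :: real
  assumes \<delta>: "0 < \<delta>"
  defines "K \<equiv> nat \<lfloor>t / \<delta>\<rfloor>"
  shows "\<delta> * (\<Sum>j\<in>{1..K}. measure M {\<omega>\<in>space M. X n \<omega> \<in> {..t - real j * \<delta>} \<and>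
                                            real j * \<delta> < X (Suc n) \<omega> - X n \<omega>})
    \<le> (\<integral>\<omega>. max 0 (t - X n \<omega>) \<partial>M) - (\<integral>\<omega>. max 0 (t - X (Suc n) \<omega>) \<partial>M)"
proof -
  let ?G = "\<lambda>j. {\<omega>\<in>space M. X n \<omega> \<in> {..t - real j * \<delta>} \<and> real j * \<delta> < X (Suc n) \<omega> - X n \<omega>}"
  have G_sets[measurable]: "?G j \<in> sets M" for j by measurable
  have int_G: "integrable M (\<lambda>\<omega>. indicator (?G j) \<omega> :: real)" for j
    by (intro integrable_bounded[where B=1]) (auto simp: indicator_def)
  have int_max: "integrable M (\<lambda>\<omega>. max 0 (t - X m \<omega>))" for m
  proof (rule integrable_bounded[where B="\<bar>t\<bar>"])
    fix \<omega> assume "\<omega> \<in> space M"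
    thus "\<bar>max 0 (t - X m \<omega>)\<bar> \<le> \<bar>t\<bar>" using X_nonneg[of \<omega> m] by linarith
  qed measurable
  have "\<delta> * (\<Sum>j\<in>{1..K}. measure M (?G j)) = (\<integral>\<omega>. \<delta> * (\<Sum>j\<in>{1..K}. indicator (?G j) \<omega>) \<partial>M)"
    using int_G by (simp add: Bochner_Integration.integral_sum Int_absorb2)
  also have "\<dots> \<le> (\<integral>\<omega>. max 0 (t - X n \<omega>) - max 0 (t - X (Suc n) \<omega>) \<partial>M)"
  proof (rule integral_mono)
    fix \<omega> assume \<omega>: "\<omega> \<in> space M"
    have "indicator (?G j) \<omega> = indicator {..t - real j * \<delta>} (X n \<omega>) *
        (indicator {real j * \<delta> <..} (X (Suc n) \<omega> - X n \<omega>) :: real)" for j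
      using \<omega> by (simp add: indicator_def)
    thus "\<delta> * (\<Sum>j\<in>{1..K}. indicator (?G j) \<omega>) \<le> max 0 (t - X n \<omega>) - max 0 (t - X (Suc n) \<omega>)"
      using grid_count_le_max_diff[OF \<delta> X_mono[OF \<omega>]] unfolding K_def by simp
  qed (use int_G int_max in auto)
  also have "\<dots> = (\<integral>\<omega>. max 0 (t - X n \<omega>) \<partial>M) - (\<integral>\<omega>. max 0 (t - X (Suc n) \<omega>) \<partial>M)"
    by (rule Bochner_Integration.integral_diff[OF int_max int_max])
  finally show ?thesis .
qed

lemma prob_le_decrease:
  assumes \<delta>: "0 < \<delta>"
  shows "measure M {\<omega>\<in>space M. X (Suc n) \<omega> \<le> t}
    \<le> c * \<delta> + c * ((\<integral>\<omega>. max 0 (t - X n \<omega>) \<partial>M) - (\<integral>\<omega>. max 0 (t - X (Suc n) \<omega>) \<partial>M))"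
proof -
  define K where "K = nat \<lfloor>t / \<delta>\<rfloor>"
  let ?below = "\<lambda>j. {..t - real j * \<delta>}"
  let ?tail = "\<lambda>j. measure M {\<omega>\<in>space M. X n \<omega> \<in> ?below j \<and> real j * \<delta> < X (Suc n) \<omega> - X n \<omega>}"
  define S where "S \<omega> = (\<Sum>j\<in>{1..K}. indicator (?below j) (X n \<omega>) * (1 - F n (real j * \<delta>) \<omega>))" for \<omega>
  have int_S: "integrable M S" unfolding S_def
    using \<delta> by (intro Bochner_Integration.integrable_sum integrable_indicator_one_minus_F) auto
  have "measure M {\<omega>\<in>space M. X (Suc n) \<omega> \<le> t}
      \<le> (\<integral>\<omega>. (\<Sum>J\<le>K. indicator {t - (real J + 1) * \<delta> <.. t - real J * \<delta>} (X n \<omega>)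
                          * F n ((real J + 1) * \<delta>) \<omega>) \<partial>M)"
    unfolding K_def by (rule prob_le_cell_kernel_sum[OF \<delta>])
  also have "\<dots> \<le> (\<integral>\<omega>. c * \<delta> + c * \<delta> * S \<omega> \<partial>M)"
  proof (rule integral_mono)
    fix \<omega> assume \<omega>: "\<omega> \<in> space M"
    show "(\<Sum>J\<le>K. indicator {t - (real J + 1) * \<delta> <.. t - real J * \<delta>} (X n \<omega>) * F n ((real J + 1) * \<delta>) \<omega>)
      \<le> c * \<delta> + c * \<delta> * S \<omega>"
      unfolding S_def K_def
      by (rule hazard_bounded_cell_sum_le[OF F_hazard_bounded[OF \<omega>] c_nonneg \<delta> X_nonneg[OF \<omega>]])
  next
    show "integrable M (\<lambda>\<omega>. \<Sum>J\<le>K. indicator {t - (real J + 1) * \<delta> <.. t - real J * \<delta>} (X n \<omega>)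
                                   * F n ((real J + 1) * \<delta>) \<omega>)"
      using \<delta> by (intro Bochner_Integration.integrable_sum integrable_indicator_F) auto
    show "integrable M (\<lambda>\<omega>. c * \<delta> + c * \<delta> * S \<omega>)"
      by (intro Bochner_Integration.integrable_add Bochner_Integration.integrable_mult_right int_S) auto
  qed
  also have "\<dots> = c * \<delta> + c * \<delta> * integral\<^sup>L M S"
    using int_S by (simp add: prob_space)
  also have "integral\<^sup>L M S = (\<Sum>j\<in>{1..K}. ?tail j)"
    unfolding S_def using \<delta>
    by (subst Bochner_Integration.integral_sum) (auto intro: integrable_indicator_one_minus_F simp: kernel_survival)
  also have "c * \<delta> + c * \<delta> * (\<Sum>j\<in>{1..K}. ?tail j)
      \<le> c * \<delta> + c * ((\<integral>\<omega>. max 0 (t - X n \<omega>) \<partial>M) - (\<integral>\<omega>. max 0 (t - X (Suc n) \<omega>) \<partial>M))"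
    using add_left_mono[OF mult_left_mono[OF grid_tail_sum_le_decrease[OF \<delta>, where t=t and n=n] c_nonneg]]
    unfolding K_def by (simp only: mult.assoc)
  finally show ?thesis .
qed

lemma sum_prob_le:
  assumes t: "0 \<le> t"
  shows "(\<Sum>m<N. measure M {\<omega>\<in>space M. X (Suc m) \<omega> \<le> t}) \<le> c * t"
proof (rule field_le_epsilon)
  fix e :: real assume e: "0 < e"
  define \<delta> where "\<delta> = e / (real N * c + 1)"
  have Nc: "0 \<le> real N * c" using c_nonneg by simp
  have \<delta>: "0 < \<delta>" using e Nc by (simp add: \<delta>_def)
  define b where "b m = (\<integral>\<omega>. max 0 (t - X m \<omega>) \<partial>M)" for m
  have "(\<Sum>m<N. measure M {\<omega>\<in>space M. X (Suc m) \<omega> \<le> t}) \<le> (\<Sum>m<N. c * \<delta> + c * (b m - b (Suc m)))"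
    unfolding b_def by (intro sum_mono prob_le_decrease \<delta>)
  also have "\<dots> = real N * c * \<delta> + c * (b 0 - b N)"
    by (simp add: sum.distrib sum_distrib_left[symmetric] sum_lessThan_telescope')
  also have "b 0 = t"
    using t X_0 by (simp add: b_def prob_space cong: Bochner_Integration.integral_cong)
  also have "real N * c * \<delta> + c * (t - b N) \<le> e + c * t"
  proof -
    have "real N * c * \<delta> = e * (real N * c / (real N * c + 1))" by (simp add: \<delta>_def field_simps)
    also have "\<dots> \<le> e * 1" using e Nc by (intro mult_left_mono) auto
    finally have "real N * c * \<delta> \<le> e" by simp
    moreover have "0 \<le> c * b N"
      using c_nonneg unfolding b_def by (simp add: Bochner_Integration.integral_nonneg)
    ultimately show ?thesis by (simp add: algebra_simps)
  qed
  finally show "(\<Sum>m<N. measure M {\<omega>\<in>space M. X (Suc m) \<omega> \<le> t}) \<le> c * t + e" by simp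
qed

lemma renewal_fun_le:
  assumes "0 \<le> t"
  shows "renewal_fun M X t \<le> ennreal (c * t)"
  unfolding renewal_fun_def
proof (rule suminf_le_const[OF summableI])
  fix N
  let ?p = "\<lambda>m. measure M {\<omega>\<in>space M. X (Suc m) \<omega> \<le> t}"
  have "(\<Sum>n<N. emeasure M {\<omega>\<in>space M. X (2 * Suc n) \<omega> \<le> t}) = ennreal (\<Sum>n<N. ?p (2 * n + 1))"
    by (simp add: emeasure_eq_measure)
  also have "(\<Sum>n<N. ?p (2 * n + 1)) = sum ?p ((\<lambda>n. 2 * n + 1) ` {..<N})"
    by (subst sum.reindex) (auto simp: inj_on_def)
  also have "\<dots> \<le> sum ?p {..<2 * N}" by (intro sum_mono2) auto
  also have "\<dots> \<le> c * t" by (rule sum_prob_le[OF assms])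
  finally show "(\<Sum>n<N. emeasure M {\<omega>\<in>space M. X (2 * Suc n) \<omega> \<le> t}) \<le> ennreal (c * t)"
    by (simp add: ennreal_leI)
qed

end

lemma level_set_in_hist_sets:
  assumes "B \<in> sets (borel :: real measure)"
  shows "{\<omega>\<in>space M. X n \<omega> \<in> B} \<in> hist_sets M S X n"
proof -
  have "UNIV \<times> B \<in> sets (borel :: (nat \<times> real) measure)"
    using assms by (simp add: borel_prod[symmetric])
  moreover have "{\<omega>\<in>space M. X n \<omega> \<in> B} = (\<lambda>\<omega>. (S n \<omega>, X n \<omega>)) -` (UNIV \<times> B) \<inter> space M" by auto
  ultimately show ?thesis unfolding hist_sets_def by (auto intro: sigma_sets.Basic)
qed

lemma alt_semi_markov_renewal_fun_le:
  assumes sm: "alt_semi_markov M S X GY GZ"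
    and [measurable]: "\<And>\<tau>. (\<lambda>x. GY x \<tau>) \<in> borel_measurable borel" "\<And>\<tau>. (\<lambda>x. GZ x \<tau>) \<in> borel_measurable borel"
    and GY: "\<And>x. 0 \<le> x \<Longrightarrow> hazard_bounded c (GY x)"
    and GZ: "\<And>x. 0 \<le> x \<Longrightarrow> hazard_bounded c (GZ x)"
    and "0 \<le> c" and "0 \<le> t"
  shows "renewal_fun M X t \<le> ennreal (c * t)"
proof -
  define F where "F n \<tau> \<omega> = (if S n \<omega> = 1 then GY (X n \<omega>) \<tau> else GZ (X n \<omega>) \<tau>)" for n \<tau> \<omega>
  note process = sm[unfolded alt_semi_markov_def]
  have [measurable]: "S n \<in> M \<rightarrow>\<^sub>M count_space UNIV" "X n \<in> borel_measurable M" for n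
    using process by blast+
  have X_nonneg: "\<omega> \<in> space M \<Longrightarrow> 0 \<le> X n \<omega>" for n \<omega>
    using process by (induction n) (auto intro: order_trans)
  interpret hazard_bounded_increments M X F c
  proof (intro hazard_bounded_increments.intro hazard_bounded_increments_axioms.intro)
    show "prob_space M" using process by blast
    show "F n \<tau> \<in> borel_measurable M" for n \<tau> unfolding F_def by measurable
    show "hazard_bounded c (\<lambda>\<tau>. F n \<tau> \<omega>)" if "\<omega> \<in> space M" for n \<omega>
      using GY[OF X_nonneg[OF that]] GZ[OF X_nonneg[OF that]] by (cases "S n \<omega> = 1") (simp_all add: F_def)
    show "measure M {\<omega>\<in>space M. X n \<omega> \<in> B \<and> X (Suc n) \<omega> - X n \<omega> \<le> \<tau>}
        = (\<integral>\<omega>. indicator B (X n \<omega>) * F n \<tau> \<omega> \<partial>M)" if "0 \<le> \<tau>" "B \<in> sets borel" for n \<tau> B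
    proof -
      have "{\<omega>\<in>space M. X n \<omega> \<in> B \<and> X (Suc n) \<omega> - X n \<omega> \<le> \<tau>}
          = {\<omega>\<in>space M. X n \<omega> \<in> B} \<inter> {\<omega>\<in>space M. X (Suc n) \<omega> - X n \<omega> \<le> \<tau>}"
        by auto
      also have "measure M \<dots> = (LINT \<omega>:{\<omega>\<in>space M. X n \<omega> \<in> B}|M. F n \<tau> \<omega>)"
        using process that(1) level_set_in_hist_sets[OF that(2)] unfolding F_def by blast
      also have "\<dots> = (\<integral>\<omega>. indicator B (X n \<omega>) * F n \<tau> \<omega> \<partial>M)"
        unfolding set_lebesgue_integral_def
        by (intro Bochner_Integration.integral_cong) (auto simp: indicator_def)
      finally show ?thesis .
    qed
  qed (use process \<open>0 \<le> c\<close> in auto)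
  show ?thesis using renewal_fun_le[OF \<open>0 \<le> t\<close>] .
qed

theorem corollary1:
  fixes M :: "'a measure" and S :: "nat \<Rightarrow> 'a \<Rightarrow> nat" and X :: "nat \<Rightarrow> 'a \<Rightarrow> real"
    and kY kZ lY lZ :: "real \<Rightarrow> real" and c :: real
  assumes "alt_semi_markov M S X (gamma_kernel kY lY) (gamma_kernel kZ lZ)"
    and "kY \<in> borel_measurable borel" "kZ \<in> borel_measurable borel"
    and "lY \<in> borel_measurable borel" "lZ \<in> borel_measurable borel"
    and "\<And>x. 0 \<le> x \<Longrightarrow> 1 \<le> kY x" "\<And>x. 0 \<le> x \<Longrightarrow> 1 \<le> kZ x"
    and "\<And>x. 0 \<le> x \<Longrightarrow> 0 < lY x" "\<And>x. 0 \<le> x \<Longrightarrow> 0 < lZ x"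
    and "0 < c"
    and "\<And>x. 0 \<le> x \<Longrightarrow> lY x \<le> c" "\<And>x. 0 \<le> x \<Longrightarrow> lZ x \<le> c"
  shows "\<forall>t\<ge>0. renewal_fun M X t \<le> ennreal (c * t)"
proof (intro allI impI)
  fix t :: real assume "0 \<le> t"
  show "renewal_fun M X t \<le> ennreal (c * t)"
  proof (rule alt_semi_markov_renewal_fun_le[OF assms(1)])
    show "(\<lambda>x. gamma_kernel kY lY x \<tau>) \<in> borel_measurable borel" for \<tau>
      using assms(2,4) by (rule borel_measurable_gamma_kernel)
    show "(\<lambda>x. gamma_kernel kZ lZ x \<tau>) \<in> borel_measurable borel" for \<tau>
      using assms(3,5) by (rule borel_measurable_gamma_kernel)
    show "hazard_bounded c (gamma_kernel kY lY x)" if "0 \<le> x" for x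
      using that assms(6,8,11) by (intro hazard_bounded_gamma_kernel)
    show "hazard_bounded c (gamma_kernel kZ lZ x)" if "0 \<le> x" for x
      using that assms(7,9,12) by (intro hazard_bounded_gamma_kernel)
  qed (use \<open>0 < c\<close> \<open>0 \<le> t\<close> in auto)
qed

end
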